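(* Let $k$ be an algebraically closed field of characteristic $p\ge0$, let $1\le s\le t$ be integers, let $R=k[x,y]/(x^s,y^t)$ with its standard grading $R=\bigoplus_{i=0}^{s+t-2}R_i$, and let $\theta$ be the image of $x+y$ in $R$. Then there exist nonzero homogeneous elements $\omega_0,\omega_1,\dots,\omega_{s-1}$ of $R$ with $\omega_i\in R_i$ for each $i$, such that $$R=\bigoplus_{i=0}^{s-1}k[\theta]\,\omega_i$$ as $k[\theta]$-modules (an internal direct sum of the cyclic submodules $k[\theta]\omega_i$, which give an indecomposable decomposition of $R$ as a $k[\theta]$-module).
   Context: $R_i$ is the $k$-span of the images of the monomials $x^ay^b$ with $a+b=i$, $a<s$, $b<t$. $k[\theta]$ is the $k$-subalgebra of $R$ generated by $\theta$, and $R$ is regarded as a $k[\theta]$-module by multiplication. *)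

theory Defs
  imports "HOL-Computational_Algebra.Polynomial"
begin

definition alg_closed :: "'a::field itself \<Rightarrow> bool" where
  "alg_closed _ \<longleftrightarrow> (\<forall>q::'a poly. degree q \<ge> 1 \<longrightarrow> (\<exists>z. poly q z = 0))"

text \<open>The ring R = k[x,y]/(x^s,y^t), represented by coefficient arrays:
  an element is a function f with f a b the coefficient of x^a y^b,
  supported on a < s, b < t (the monomial basis of R).\<close>
definition Rcar :: "nat \<Rightarrow> nat \<Rightarrow> (nat \<Rightarrow> nat \<Rightarrow> 'a::field) set" where
  "Rcar s t = {f. \<forall>a b. (s \<le> a \<or> t \<le> b) \<longrightarrow> f a b = 0}"

definition Rzero :: "nat \<Rightarrow> nat \<Rightarrow> 'a::field" where
  "Rzero = (\<lambda>a b. 0)"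

definition Rone :: "nat \<Rightarrow> nat \<Rightarrow> nat \<Rightarrow> nat \<Rightarrow> 'a::field" where
  "Rone s t = (\<lambda>a b. if a = 0 \<and> b = 0 \<and> 0 < s \<and> 0 < t then 1 else 0)"

definition Rmul :: "nat \<Rightarrow> nat \<Rightarrow> (nat \<Rightarrow> nat \<Rightarrow> 'a::field) \<Rightarrow> (nat \<Rightarrow> nat \<Rightarrow> 'a) \<Rightarrow> nat \<Rightarrow> nat \<Rightarrow> 'a" where
  "Rmul s t f g = (\<lambda>a b. if a < s \<and> b < t
      then (\<Sum>i\<le>a. \<Sum>j\<le>b. f i j * g (a - i) (b - j)) else 0)"

definition Rtheta :: "nat \<Rightarrow> nat \<Rightarrow> nat \<Rightarrow> nat \<Rightarrow> 'a::field" where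
  "Rtheta s t = (\<lambda>a b. if a < s \<and> b < t \<and> ((a = 1 \<and> b = 0) \<or> (a = 0 \<and> b = 1)) then 1 else 0)"

fun Rtheta_pow :: "nat \<Rightarrow> nat \<Rightarrow> nat \<Rightarrow> nat \<Rightarrow> nat \<Rightarrow> 'a::field" where
  "Rtheta_pow s t 0 = Rone s t"
| "Rtheta_pow s t (Suc n) = Rmul s t (Rtheta s t) (Rtheta_pow s t n)"

definition Rhomog :: "nat \<Rightarrow> (nat \<Rightarrow> nat \<Rightarrow> 'a::field) \<Rightarrow> bool" where
  "Rhomog i f \<longleftrightarrow> (\<forall>a b. f a b \<noteq> 0 \<longrightarrow> a + b = i)"

definition Rcyclic :: "nat \<Rightarrow> nat \<Rightarrow> (nat \<Rightarrow> nat \<Rightarrow> 'a::field) \<Rightarrow> (nat \<Rightarrow> nat \<Rightarrow> 'a) set" where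
  "Rcyclic s t w = {Rmul s t (\<lambda>a b. \<Sum>j\<le>degree q. coeff q j * Rtheta_pow s t j a b) w | q. True}"

end

theory Submission
  imports Defs "HOL-Library.Function_Algebras"
begin

text \<open>Multiplication by \<theta> is a nilpotent operator of degree one on the graded algebra R. The
  classical splitting argument for nilpotent operators, run with homogeneous generators, writes
  R as a direct sum of cyclic k[\<theta>]-modules with homogeneous generators. To see which degrees
  occur, reduce modulo \<theta>: substituting y = -x identifies R/\<theta>R with k[x]/(x^s), because
  s \<le> t, so R/\<theta>R is one-dimensional in each degree 0, ..., s - 1 and zero above. The
  generators of any such decomposition map to a basis of R/\<theta>R, hence there is exactly one
  generator in each degree i < s.\<close>

type_synonym 'a coeffs = "nat \<Rightarrow> nat \<Rightarrow> 'a"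

lemma sum_apply2: "sum F A a b = (\<Sum>i\<in>A. F i a b)"
  by (induction A rule: infinite_finite_induct) auto

definition scale :: "'a::field \<Rightarrow> 'a coeffs \<Rightarrow> 'a coeffs" where
  "scale c f = (\<lambda>a b. c * f a b)"

lemma scale_apply: "scale c f a b = c * f a b"
  by (simp add: scale_def)

lemma scale_0_left [simp]: "scale 0 f = 0"
  and scale_0_right [simp]: "scale c 0 = 0"
  and scale_1 [simp]: "scale 1 f = f"
  and scale_minus1: "scale (-1) f = - f"
  and scale_add_right: "scale c (f + g) = scale c f + scale c g"
  and scale_diff_left: "scale c f - scale c' f = scale (c - c') f"
  and scale_scale: "scale c (scale c' f) = scale (c * c') f"
  by (simp_all add: scale_def fun_eq_iff algebra_simps)

lemma scale_sum: "scale c (sum F A) = (\<Sum>i\<in>A. scale c (F i))"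
  and scale_sum_left: "scale (sum g A) f = (\<Sum>i\<in>A. scale (g i) f)"
  by (simp_all add: scale_def fun_eq_iff sum_apply2 sum_distrib_left sum_distrib_right)

definition theta_mul :: "nat \<Rightarrow> nat \<Rightarrow> 'a::field coeffs \<Rightarrow> 'a coeffs" where
  "theta_mul s t f = (\<lambda>a b. (if a < s \<and> b < t \<and> 0 < a then f (a - 1) b else 0)
      + (if a < s \<and> b < t \<and> 0 < b then f a (b - 1) else 0))"

abbreviation theta_pow :: "nat \<Rightarrow> nat \<Rightarrow> nat \<Rightarrow> 'a::field coeffs \<Rightarrow> 'a coeffs" where
  "theta_pow s t j \<equiv> theta_mul s t ^^ j"

definition homog_part :: "nat \<Rightarrow> 'a::field coeffs \<Rightarrow> 'a coeffs" where
  "homog_part d f = (\<lambda>a b. if a + b = d then f a b else 0)"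

definition monomial :: "nat \<Rightarrow> nat \<Rightarrow> 'a::field coeffs" where
  "monomial a0 b0 = (\<lambda>a b. if a = a0 \<and> b = b0 then 1 else 0)"

lemma theta_mul_add: "theta_mul s t (f + g) = theta_mul s t f + theta_mul s t g"
  and theta_mul_diff: "theta_mul s t (f - g) = theta_mul s t f - theta_mul s t g"
  and theta_mul_zero: "theta_mul s t 0 = 0"
  and theta_mul_scale: "theta_mul s t (scale c f) = scale c (theta_mul s t f)"
  by (auto simp: theta_mul_def scale_def fun_eq_iff algebra_simps)

lemma theta_pow_add: "theta_pow s t j (f + g) = theta_pow s t j f + theta_pow s t j g"
  and theta_pow_diff: "theta_pow s t j (f - g) = theta_pow s t j f - theta_pow s t j g"
  and theta_pow_zero: "theta_pow s t j 0 = 0"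
  and theta_pow_scale: "theta_pow s t j (scale c f) = scale c (theta_pow s t j f)"
  by (induction j) (simp_all add: theta_mul_add theta_mul_diff theta_mul_zero theta_mul_scale)

lemma theta_pow_sum: "theta_pow s t j (sum F A) = (\<Sum>i\<in>A. theta_pow s t j (F i))"
  using sum_comp_morphism[of "theta_pow s t j" F A] by (simp add: theta_pow_zero theta_pow_add o_def)

lemma theta_mul_sum: "theta_mul s t (sum F A) = (\<Sum>i\<in>A. theta_mul s t (F i))"
  using theta_pow_sum[where j = 1] by simp

lemma theta_mul_Rcar: "theta_mul s t f \<in> Rcar s t"
  by (auto simp: theta_mul_def Rcar_def)

lemma theta_pow_eq_0_below: "a + b < j \<Longrightarrow> theta_pow s t j f a b = 0"
proof (induction j arbitrary: a b)
  case (Suc j)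
  then show ?case using Suc.IH[of "a - 1" b] Suc.IH[of a "b - 1"]
    by (auto simp: theta_mul_def)
qed simp

lemma theta_pow_nilpotent:
  assumes "0 < s" and "s + t \<le> j"
  shows "theta_pow s t j f = 0"
proof (intro ext)
  fix a b
  obtain j' where j: "j = Suc j'"
    using assms by (cases j) auto
  show "theta_pow s t j f a b = 0 a b"
  proof (cases "a < s \<and> b < t")
    case True
    then show ?thesis
      using theta_pow_eq_0_below[of a b j] assms by simp
  next
    case False
    then show ?thesis
      using theta_mul_Rcar[of s t "theta_pow s t j' f"] by (auto simp: j Rcar_def)
  qed
qed

lemma Rhomog_theta_mul: "Rhomog d f \<Longrightarrow> Rhomog (Suc d) (theta_mul s t f)"
  unfolding Rhomog_def
proof (intro allI impI)
  fix a b
  assume hom: "\<forall>a b. f a b \<noteq> 0 \<longrightarrow> a + b = d" and "theta_mul s t f a b \<noteq> 0"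
  then have "(0 < a \<and> f (a - 1) b \<noteq> 0) \<or> (0 < b \<and> f a (b - 1) \<noteq> 0)"
    by (auto simp: theta_mul_def split: if_splits)
  then show "a + b = Suc d" using hom by force
qed

lemma Rhomog_theta_pow: "Rhomog d f \<Longrightarrow> Rhomog (d + j) (theta_pow s t j f)"
  by (induction j) (simp_all add: Rhomog_theta_mul)

lemma theta_pow_homog_eq_0:
  "Rhomog d f \<Longrightarrow> a + b \<noteq> d + j \<Longrightarrow> theta_pow s t j f a b = 0"
  using Rhomog_theta_pow[of d f j s t] unfolding Rhomog_def by blast

lemma theta_mul_homog_part: "theta_mul s t (homog_part d f) = homog_part (Suc d) (theta_mul s t f)"
proof (intro ext)
  fix a b
  have "0 < a \<Longrightarrow> (a - 1 + b = d) = (a + b = Suc d)" "0 < b \<Longrightarrow> (a + (b - 1) = d) = (a + b = Suc d)"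
    by arith+
  then show "theta_mul s t (homog_part d f) a b = homog_part (Suc d) (theta_mul s t f) a b"
    unfolding theta_mul_def homog_part_def by auto
qed

lemma theta_pow_homog_part: "theta_pow s t j (homog_part d f) = homog_part (d + j) (theta_pow s t j f)"
  by (induction j) (simp_all add: theta_mul_homog_part)

lemma Rhomog_homog_part: "Rhomog d (homog_part d f)"
  by (auto simp: Rhomog_def homog_part_def)

lemma sum_homog_parts:
  assumes "f \<in> Rcar s t"
  shows "(\<Sum>d<s+t. homog_part d f) = f"
proof (intro ext)
  fix a b
  have "(\<Sum>d<s+t. homog_part d f) a b = (if a + b < s + t then f a b else 0)"
    by (simp add: sum_apply2 homog_part_def)
  also have "\<dots> = f a b"
  proof (cases "a + b < s + t")
    case False
    then have "s \<le> a \<or> t \<le> b" by linarith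
    then show ?thesis using assms by (auto simp: Rcar_def)
  qed simp
  finally show "(\<Sum>d<s+t. homog_part d f) a b = f a b" .
qed

lemma Rmul_Rtheta: "Rmul s t (Rtheta s t) f = theta_mul s t f"
proof (intro ext)
  fix a b
  show "Rmul s t (Rtheta s t) f a b = theta_mul s t f a b"
  proof (cases "a < s \<and> b < t")
    case True
    then have "(\<Sum>i\<le>a. \<Sum>j\<le>b. Rtheta s t i j * f (a - i) (b - j)) =
       (\<Sum>i\<le>a. \<Sum>j\<le>b. (if j = 0 then (if i = 1 then f (a - 1) b else 0) else 0)
          + (if j = 1 then (if i = 0 then f a (b - 1) else 0) else 0))"
      by (intro sum.cong refl) (auto simp: Rtheta_def)
    also have "\<dots> = (if 0 < a then f (a - 1) b else 0) + (if 0 < b then f a (b - 1) else 0)"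
      by (simp add: sum.distrib Suc_le_eq)
    finally show ?thesis using True unfolding Rmul_def theta_mul_def by simp
  qed (auto simp: Rmul_def theta_mul_def)
qed

lemma Rmul_theta_mul: "Rmul s t (theta_mul s t p) w = theta_mul s t (Rmul s t p w)"
proof (intro ext)
  fix a b
  show "Rmul s t (theta_mul s t p) w a b = theta_mul s t (Rmul s t p w) a b"
  proof (cases "a < s \<and> b < t")
    case True
    have "Rmul s t (theta_mul s t p) w a b =
        (\<Sum>i\<le>a. \<Sum>j\<le>b. (if 0 < i then p (i - 1) j * w (a - i) (b - j) else 0))
      + (\<Sum>i\<le>a. \<Sum>j\<le>b. (if 0 < j then p i (j - 1) * w (a - i) (b - j) else 0))"
      using True unfolding Rmul_def theta_mul_def sum.distrib[symmetric]
      by (auto intro!: sum.cong simp: algebra_simps)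
    also have "(\<Sum>i\<le>a. \<Sum>j\<le>b. (if 0 < i then p (i - 1) j * w (a - i) (b - j) else 0))
        = (if 0 < a then Rmul s t p w (a - 1) b else 0)"
    proof (cases a)
      case (Suc a')
      then show ?thesis using True
        by (simp only: Suc) (simp add: sum.atMost_Suc_shift Rmul_def del: sum.atMost_Suc)
    qed simp
    also have "(\<Sum>i\<le>a. \<Sum>j\<le>b. (if 0 < j then p i (j - 1) * w (a - i) (b - j) else 0))
        = (if 0 < b then Rmul s t p w a (b - 1) else 0)"
    proof (cases b)
      case (Suc b')
      then show ?thesis using True
        by (simp only: Suc) (simp add: sum.atMost_Suc_shift Rmul_def del: sum.atMost_Suc)
    qed simp
    finally show ?thesis using True by (simp add: theta_mul_def)
  qed (auto simp: Rmul_def theta_mul_def)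
qed

lemma Rmul_Rone:
  assumes "w \<in> Rcar s t"
  shows "Rmul s t (Rone s t) w = w"
proof (intro ext)
  fix a b
  show "Rmul s t (Rone s t) w a b = w a b"
  proof (cases "a < s \<and> b < t")
    case True
    then have "(\<Sum>i\<le>a. \<Sum>j\<le>b. Rone s t i j * w (a - i) (b - j))
       = (\<Sum>i\<le>a. \<Sum>j\<le>b. if j = 0 then (if i = 0 then w a b else 0) else 0)"
      by (intro sum.cong refl) (auto simp: Rone_def)
    also have "\<dots> = w a b"
      by simp
    finally show ?thesis using True unfolding Rmul_def by simp
  qed (use assms in \<open>auto simp: Rmul_def Rcar_def\<close>)
qed

lemma Rmul_Rtheta_pow: "w \<in> Rcar s t \<Longrightarrow> Rmul s t (Rtheta_pow s t j) w = theta_pow s t j w"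
  by (induction j) (simp_all add: Rmul_Rone Rmul_Rtheta Rmul_theta_mul)

lemma Rmul_sum_left:
  "Rmul s t (\<lambda>a b. \<Sum>j\<in>J. c j * P j a b) w = (\<Sum>j\<in>J. scale (c j) (Rmul s t (P j) w))"
proof (intro ext)
  fix a b
  have "(\<Sum>i\<le>a. \<Sum>j\<le>b. (\<Sum>k\<in>J. c k * P k i j) * w (a - i) (b - j))
      = (\<Sum>k\<in>J. c k * (\<Sum>i\<le>a. \<Sum>j\<le>b. P k i j * w (a - i) (b - j)))"
    by (simp add: sum_distrib_left sum_distrib_right mult.assoc sum.swap[where A = J])
  then show "Rmul s t (\<lambda>a b. \<Sum>j\<in>J. c j * P j a b) w a b = (\<Sum>j\<in>J. scale (c j) (Rmul s t (P j) w)) a b"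
    by (cases "a < s \<and> b < t") (auto simp: Rmul_def sum_apply2 scale_def)
qed

text \<open>Since \<theta> ^ (s + t) = 0, coefficient sequences truncated at s + t describe all of k[\<theta>].\<close>

definition theta_poly_mul :: "nat \<Rightarrow> nat \<Rightarrow> (nat \<Rightarrow> 'a::field) \<Rightarrow> 'a coeffs \<Rightarrow> 'a coeffs" where
  "theta_poly_mul s t c w = (\<Sum>j<s+t. scale (c j) (theta_pow s t j w))"

definition theta_cyclic :: "nat \<Rightarrow> nat \<Rightarrow> 'a::field coeffs \<Rightarrow> 'a coeffs set" where
  "theta_cyclic s t w = range (\<lambda>c. theta_poly_mul s t c w)"

lemma theta_poly_mul_truncate:
  assumes "0 < s" and "\<forall>j\<ge>n. c j = 0"
  shows "(\<Sum>j<n. scale (c j) (theta_pow s t j w)) = theta_poly_mul s t c w"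
proof -
  have "(\<Sum>j<n. scale (c j) (theta_pow s t j w)) = (\<Sum>j<n + (s + t). scale (c j) (theta_pow s t j w))"
    using assms(2) by (intro sum.mono_neutral_left) auto
  also have "\<dots> = theta_poly_mul s t c w"
    unfolding theta_poly_mul_def
    by (intro sum.mono_neutral_right) (auto simp: theta_pow_nilpotent[OF assms(1)])
  finally show ?thesis .
qed

lemma Rcyclic_eq_theta_cyclic:
  assumes "0 < s" and w: "w \<in> Rcar s t"
  shows "Rcyclic s t w = theta_cyclic s t w"
proof -
  have poly_mul: "Rmul s t (\<lambda>a b. \<Sum>j\<le>degree q. coeff q j * Rtheta_pow s t j a b) w
      = theta_poly_mul s t (coeff q) w" for q :: "'a poly"
    using theta_poly_mul_truncate[OF assms(1), of "Suc (degree q)" "coeff q"]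
    by (simp add: Rmul_sum_left Rmul_Rtheta_pow[OF w] lessThan_Suc_atMost coeff_eq_0)
  have "theta_poly_mul s t c w = theta_poly_mul s t (coeff (\<Sum>j<s+t. monom (c j) j)) w" for c
    unfolding theta_poly_mul_def by (intro sum.cong) (auto simp: coeff_sum)
  then show ?thesis
    unfolding Rcyclic_def theta_cyclic_def poly_mul by auto
qed

lemma theta_poly_mul_in_theta_cyclic: "theta_poly_mul s t c w \<in> theta_cyclic s t w"
  unfolding theta_cyclic_def by (rule rangeI)

lemma theta_poly_mul_diff:
  "theta_poly_mul s t c w - theta_poly_mul s t c' w = theta_poly_mul s t (\<lambda>j. c j - c' j) w"
  unfolding theta_poly_mul_def by (simp add: sum_subtractf[symmetric] scale_diff_left)

lemma scale_theta_poly_mul: "scale a (theta_poly_mul s t c w) = theta_poly_mul s t (\<lambda>j. a * c j) w"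
  unfolding theta_poly_mul_def by (simp add: scale_sum scale_scale)

lemma theta_pow_theta_poly_mul:
  "theta_pow s t i (theta_poly_mul s t c w) = (\<Sum>j<s+t. scale (c j) (theta_pow s t (i + j) w))"
  unfolding theta_poly_mul_def by (simp add: theta_pow_sum theta_pow_scale funpow_add)

lemma theta_mul_theta_poly_mul:
  assumes "0 < s"
  shows "theta_mul s t (theta_poly_mul s t c w) = theta_poly_mul s t (\<lambda>j. if j = 0 then 0 else c (j - 1)) w"
proof -
  have "theta_mul s t (theta_poly_mul s t c w) = (\<Sum>j<s+t. scale (c j) (theta_pow s t (Suc j) w))"
    using theta_pow_theta_poly_mul[where i = 1] by simp
  also have "\<dots> = (\<Sum>j<Suc (s + t). scale (if j = 0 then 0 else c (j - 1)) (theta_pow s t j w))"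
    by (simp only: sum.lessThan_Suc_shift) simp
  also have "\<dots> = theta_poly_mul s t (\<lambda>j. if j = 0 then 0 else c (j - 1)) w"
    unfolding theta_poly_mul_def by (simp add: theta_pow_nilpotent[OF assms])
  finally show ?thesis .
qed

lemma theta_cyclic_diff:
  "m \<in> theta_cyclic s t w \<Longrightarrow> m' \<in> theta_cyclic s t w \<Longrightarrow> m - m' \<in> theta_cyclic s t w"
  unfolding theta_cyclic_def by (auto simp: theta_poly_mul_diff)

lemma theta_cyclic_scale: "m \<in> theta_cyclic s t w \<Longrightarrow> scale a m \<in> theta_cyclic s t w"
  unfolding theta_cyclic_def by (auto simp: scale_theta_poly_mul)

lemma theta_cyclic_theta_mul:
  "0 < s \<Longrightarrow> m \<in> theta_cyclic s t w \<Longrightarrow> theta_mul s t m \<in> theta_cyclic s t w"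
  unfolding theta_cyclic_def by (auto simp: theta_mul_theta_poly_mul)

lemma self_in_theta_cyclic:
  assumes "0 < s"
  shows "w \<in> theta_cyclic s t w"
proof -
  have "theta_poly_mul s t (\<lambda>j. if j = 0 then 1 else 0) w = w"
    using assms by (simp add: theta_poly_mul_def if_distrib[of "\<lambda>c. scale c _"] cong: if_cong)
  then show ?thesis
    by (metis theta_poly_mul_in_theta_cyclic)
qed

subsection \<open>Graded k[\<theta>]-submodules\<close>

locale graded_submodule =
  fixes s t :: nat and V :: "'a::field coeffs set"
  assumes subset_Rcar: "V \<subseteq> Rcar s t"
    and zero_mem: "0 \<in> V"
    and add_closed: "u \<in> V \<Longrightarrow> v \<in> V \<Longrightarrow> u + v \<in> V"
    and scale_closed: "u \<in> V \<Longrightarrow> scale c u \<in> V"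
    and theta_mul_closed: "u \<in> V \<Longrightarrow> theta_mul s t u \<in> V"
    and homog_part_closed: "u \<in> V \<Longrightarrow> homog_part d u \<in> V"
begin

lemma uminus_closed: "u \<in> V \<Longrightarrow> - u \<in> V"
  using scale_closed[of u "-1"] by (simp add: scale_minus1)

lemma diff_closed: "u \<in> V \<Longrightarrow> v \<in> V \<Longrightarrow> u - v \<in> V"
  using add_closed[OF _ uminus_closed, of u v] by simp

lemma sum_closed: "(\<And>i. i \<in> A \<Longrightarrow> F i \<in> V) \<Longrightarrow> sum F A \<in> V"
  by (induction A rule: infinite_finite_induct) (auto intro: zero_mem add_closed)

lemma theta_pow_closed: "u \<in> V \<Longrightarrow> theta_pow s t j u \<in> V"
  by (induction j) (simp_all add: theta_mul_closed)

lemma theta_cyclic_subset: "w \<in> V \<Longrightarrow> theta_cyclic s t w \<subseteq> V"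
  unfolding theta_cyclic_def theta_poly_mul_def
  by (auto intro!: sum_closed scale_closed theta_pow_closed)

end

lemma graded_submodule_Rcar: "graded_submodule s t (Rcar s t)"
  by unfold_locales (auto simp: Rcar_def scale_def homog_part_def theta_mul_def)

subsection \<open>Splitting off a cyclic summand\<close>

lemma theta_pow_theta_poly_mul_apply:
  assumes "Rhomog d w" and "a + b = d + n" and "j \<le> n" and "n < s + t"
  shows "theta_pow s t j (theta_poly_mul s t c w) a b = c (n - j) * theta_pow s t n w a b"
proof -
  have "theta_pow s t j (theta_poly_mul s t c w) a b = (\<Sum>i<s+t. c i * theta_pow s t (j + i) w a b)"
    by (simp add: theta_pow_theta_poly_mul sum_apply2 scale_apply)
  also have "\<dots> = (\<Sum>i<s+t. if i = n - j then c i * theta_pow s t n w a b else 0)"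
    using assms by (intro sum.cong refl) (auto simp: theta_pow_homog_eq_0)
  also have "\<dots> = c (n - j) * theta_pow s t n w a b"
    using assms(4) by simp
  finally show ?thesis .
qed

lemma theta_mul_theta_poly_mul_apply_eq_0:
  assumes "Rhomog d w" and "a + b = d"
  shows "theta_mul s t (theta_poly_mul s t c w) a b = 0"
proof -
  have "theta_pow s t (Suc j) w a b = 0" for j
    using assms by (intro theta_pow_homog_eq_0) auto
  then show ?thesis
    using theta_pow_theta_poly_mul[where i = 1 and s = s and t = t and c = c and w = w]
    by (simp add: sum_apply2 scale_apply)
qed

context graded_submodule
begin

lemma exists_homogeneous_of_max_height:
  assumes "0 < s" and "v \<in> V" and "v \<noteq> 0"
  obtains w d n a b where "w \<in> V" and "Rhomog d w"
    and "\<forall>u\<in>V. theta_pow s t (Suc n) u = 0" and "theta_pow s t n w a b \<noteq> 0"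
proof -
  define N where "N = (LEAST N. \<forall>u\<in>V. theta_pow s t N u = 0)"
  have N: "\<forall>u\<in>V. theta_pow s t N u = 0"
    unfolding N_def by (rule LeastI_ex) (use theta_pow_nilpotent[OF assms(1)] in blast)
  obtain n where n: "N = Suc n"
    using N assms(2,3) by (cases N) auto
  obtain u where u: "u \<in> V" "theta_pow s t n u \<noteq> 0"
    using Least_le[of "\<lambda>N. \<forall>u\<in>V. theta_pow s t N u = 0" n] n unfolding N_def[symmetric] by auto
  have "theta_pow s t n u = (\<Sum>d<s+t. theta_pow s t n (homog_part d u))"
    using u(1) subset_Rcar by (simp add: theta_pow_sum[symmetric] sum_homog_parts subsetD)
  then obtain d where "theta_pow s t n (homog_part d u) \<noteq> 0"
    using u(2) by (metis (mono_tags, lifting) sum.neutral)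
  then obtain a b where "theta_pow s t n (homog_part d u) a b \<noteq> 0"
    by (auto simp: fun_eq_iff)
  moreover have "homog_part d u \<in> V"
    using u(1) by (rule homog_part_closed)
  ultimately show thesis
    using N n by (intro that[of "homog_part d u" d n a b] Rhomog_homog_part) auto
qed

lemma graded_submodule_annihilator:
  assumes "\<forall>u\<in>V. theta_pow s t (Suc n) u = 0"
  shows "graded_submodule s t {u\<in>V. \<forall>j\<le>n. theta_pow s t j u a b = 0}"
proof
  fix u assume u: "u \<in> {u\<in>V. \<forall>j\<le>n. theta_pow s t j u a b = 0}"
  have "theta_pow s t j (theta_mul s t u) a b = 0" if "j \<le> n" for j
  proof -
    have "theta_pow s t j (theta_mul s t u) = theta_pow s t (Suc j) u"
      by (simp only: funpow_Suc_right comp_apply)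
    then show ?thesis
      using u assms that by (cases "j = n") (auto simp del: funpow.simps)
  qed
  then show "theta_mul s t u \<in> {u\<in>V. \<forall>j\<le>n. theta_pow s t j u a b = 0}"
    using u theta_mul_closed by blast
  show "homog_part d u \<in> {u\<in>V. \<forall>j\<le>n. theta_pow s t j u a b = 0}" for d
  proof -
    have "theta_pow s t j (homog_part d u) a b = 0" if "j \<le> n" for j
      using u that unfolding theta_pow_homog_part by (simp add: homog_part_def)
    then show ?thesis
      using u homog_part_closed by blast
  qed
  show "scale c u \<in> {u\<in>V. \<forall>j\<le>n. theta_pow s t j u a b = 0}" for c
    using u scale_closed by (auto simp: theta_pow_scale scale_apply)
qed (use subset_Rcar zero_mem add_closed in \<open>auto simp: theta_pow_zero theta_pow_add\<close>)

text \<open>The classical splitting argument: a vector w of maximal height n + 1 is detected by a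
  coordinate (a, b) of \<theta>^n w, and the elements whose first n + 1 \<theta>-translates vanish at
  (a, b) form a complement of k[\<theta>] w.\<close>

lemma theta_cyclic_complement:
  assumes "0 < s" and w: "w \<in> V" "Rhomog d w"
    and height: "\<forall>u\<in>V. theta_pow s t (Suc n) u = 0" and ab: "theta_pow s t n w a b \<noteq> 0"
  defines "W \<equiv> {u\<in>V. \<forall>j\<le>n. theta_pow s t j u a b = 0}"
  shows "\<forall>u\<in>V. \<exists>m\<in>theta_cyclic s t w. u - m \<in> W"
    and "\<forall>m\<in>theta_cyclic s t w. m \<in> W \<longrightarrow> m = 0"
proof -
  have abd: "a + b = d + n"
    using ab Rhomog_theta_pow[OF w(2)] by (auto simp: Rhomog_def)
  have n: "n < s + t"
  proof (rule ccontr)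
    assume "\<not> n < s + t"
    then have "theta_pow s t n w = 0"
      by (simp add: theta_pow_nilpotent[OF assms(1)])
    then show False
      using ab by simp
  qed
  note coord = theta_pow_theta_poly_mul_apply[OF w(2) abd _ n]
  show "\<forall>u\<in>V. \<exists>m\<in>theta_cyclic s t w. u - m \<in> W"
  proof
    fix u assume u: "u \<in> V"
    define c where "c i = theta_pow s t (n - i) u a b / theta_pow s t n w a b" for i
    have "theta_poly_mul s t c w \<in> V"
      using theta_cyclic_subset[OF w(1)] theta_poly_mul_in_theta_cyclic by blast
    moreover have "theta_pow s t j (theta_poly_mul s t c w) a b = theta_pow s t j u a b" if "j \<le> n" for j
      using coord[OF that] that ab by (simp add: c_def)
    ultimately have "u - theta_poly_mul s t c w \<in> W"
      using u diff_closed by (simp add: W_def theta_pow_diff)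
    then show "\<exists>m\<in>theta_cyclic s t w. u - m \<in> W"
      using theta_poly_mul_in_theta_cyclic by blast
  qed
  show "\<forall>m\<in>theta_cyclic s t w. m \<in> W \<longrightarrow> m = 0"
  proof (intro ballI impI)
    fix m assume "m \<in> theta_cyclic s t w" and "m \<in> W"
    then obtain c where m: "m = theta_poly_mul s t c w" and "\<forall>j\<le>n. theta_pow s t j m a b = 0"
      by (auto simp: theta_cyclic_def W_def)
    then have low: "c i = 0" if "i \<le> n" for i
      using coord[of "n - i" c] that ab by simp
    have high: "theta_pow s t i w = 0" if "n < i" for i
    proof -
      define k where "k = i - Suc n"
      have i: "i = k + Suc n"
        using that by (simp add: k_def)
      have "theta_pow s t (Suc n) w = 0"
        using height w(1) by blast
      then show ?thesis
        by (simp only: i funpow_add comp_apply theta_pow_zero)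
    qed
    have "scale (c i) (theta_pow s t i w) = 0" for i
      by (cases "i \<le> n") (simp_all add: low high)
    then show "m = 0"
      unfolding m theta_poly_mul_def by simp
  qed
qed

end

subsection \<open>Reduction modulo \<theta>\<close>

text \<open>The coefficient of x^d in g(x, -x). For d < s \<le> t these are the coordinates of the
  projection R \<rightarrow> R/\<theta>R = k[x]/(x^s).\<close>

definition coeff_y_neg_x :: "nat \<Rightarrow> 'a::field coeffs \<Rightarrow> 'a" where
  "coeff_y_neg_x d g = (\<Sum>b\<le>d. (-1) ^ b * g (d - b) b)"

lemma coeff_y_neg_x_add: "coeff_y_neg_x d (f + g) = coeff_y_neg_x d f + coeff_y_neg_x d g"
  and coeff_y_neg_x_zero: "coeff_y_neg_x d 0 = 0"
  and coeff_y_neg_x_scale: "coeff_y_neg_x d (scale c f) = c * coeff_y_neg_x d f"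
  by (simp_all add: coeff_y_neg_x_def scale_def sum.distrib sum_distrib_left algebra_simps)

lemma coeff_y_neg_x_sum: "coeff_y_neg_x d (sum F A) = (\<Sum>i\<in>A. coeff_y_neg_x d (F i))"
  using sum_comp_morphism[of "coeff_y_neg_x d" F A]
  by (simp add: coeff_y_neg_x_zero coeff_y_neg_x_add o_def)

lemma coeff_y_neg_x_homog: "Rhomog e f \<Longrightarrow> e \<noteq> d \<Longrightarrow> coeff_y_neg_x d f = 0"
  unfolding coeff_y_neg_x_def Rhomog_def by (intro sum.neutral) force

lemma coeff_y_neg_x_monomial:
  "coeff_y_neg_x d (monomial a b) = (if a + b = d then (-1) ^ b else 0)"
proof -
  have "coeff_y_neg_x d (monomial a b) = (\<Sum>b'\<le>d. if b' = b then (if a + b = d then (-1) ^ b else 0) else 0)"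
    unfolding coeff_y_neg_x_def monomial_def by (intro sum.cong refl) auto
  then show ?thesis
    by auto
qed

text \<open>This is where s \<le> t is used: in degrees d < s no monomial x^a y^b is cut off by y^t,
  so the image of multiplication by \<theta> telescopes to zero.\<close>

lemma coeff_y_neg_x_theta_mul:
  assumes "d < s" and "s \<le> t"
  shows "coeff_y_neg_x d (theta_mul s t h) = 0"
proof -
  have "coeff_y_neg_x d (theta_mul s t h) = (\<Sum>b\<le>d. (if b < d then (-1) ^ b * h (d - b - 1) b else 0))
      + (\<Sum>b\<le>d. (if 0 < b then (-1) ^ b * h (d - b) (b - 1) else 0))"
    unfolding coeff_y_neg_x_def theta_mul_def sum.distrib[symmetric]
    using assms by (intro sum.cong refl) (auto simp: algebra_simps)
  also have "\<dots> = 0"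
  proof (cases d)
    case (Suc d')
    have "(\<Sum>b\<le>d. (if b < d then (-1) ^ b * h (d - b - 1) b else 0)) = (\<Sum>b\<le>d'. (-1) ^ b * h (d' - b) b)"
      unfolding Suc by (simp del: sum.atMost_Suc add: sum.atMost_Suc[of _ d'] Suc_diff_le)
    moreover have "(\<Sum>b\<le>d. (if 0 < b then (-1) ^ b * h (d - b) (b - 1) else 0))
        = - (\<Sum>b\<le>d'. (-1) ^ b * h (d' - b) b)"
      unfolding Suc by (simp del: sum.atMost_Suc add: sum.atMost_Suc_shift sum_negf)
    ultimately show ?thesis
      by simp
  qed simp
  finally show ?thesis .
qed

lemma coeff_y_neg_x_theta_poly_mul:
  assumes "d < s" and "s \<le> t"
  shows "coeff_y_neg_x d (theta_poly_mul s t c w) = c 0 * coeff_y_neg_x d w"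
proof -
  have "coeff_y_neg_x d (scale (c j) (theta_pow s t j w)) = (if j = 0 then c 0 * coeff_y_neg_x d w else 0)"
    for j
    by (cases j) (simp_all add: coeff_y_neg_x_scale coeff_y_neg_x_theta_mul[OF assms])
  then show ?thesis
    using assms by (simp add: theta_poly_mul_def coeff_y_neg_x_sum)
qed

lemma monomial_Rcar: "a < s \<Longrightarrow> b < t \<Longrightarrow> monomial a b \<in> Rcar s t"
  by (auto simp: monomial_def Rcar_def)

lemma theta_mul_monomial:
  assumes "a < s" and "Suc b < t"
  shows "theta_mul s t (monomial a b) = (if Suc a < s then monomial (Suc a) b else 0) + monomial a (Suc b)"
proof (intro ext)
  fix x y
  have "(0 < x \<and> x - 1 = a) = (x = Suc a)" "(0 < y \<and> y - 1 = b) = (y = Suc b)"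
    by arith+
  then show "theta_mul s t (monomial a b) x y = ((if Suc a < s then monomial (Suc a) b else 0) + monomial a (Suc b)) x y"
    unfolding theta_mul_def monomial_def using assms by (cases "Suc a < s") auto
qed

lemma monomial_mod_theta:
  assumes "a < s" and "b < t"
  shows "\<exists>h\<in>Rcar s t. monomial a b = theta_mul s t h + (if a + b < s then scale ((-1) ^ b) (monomial (a + b) 0) else 0)"
  using assms
proof (induction b arbitrary: a)
  case 0
  then have "(monomial a 0 :: 'a coeffs) = theta_mul s t 0 + (if a + 0 < s then scale ((-1) ^ 0) (monomial (a + 0) 0) else 0)"
    by (simp add: theta_mul_zero)
  then show ?case
    using graded_submodule.zero_mem[OF graded_submodule_Rcar] by blast
next
  case (Suc b)
  have \<theta>: "theta_mul s t (monomial a b) = (if Suc a < s then monomial (Suc a) b else 0) + (monomial a (Suc b) :: 'a coeffs)"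
    using Suc.prems by (intro theta_mul_monomial) auto
  show ?case
  proof (cases "Suc a < s")
    case True
    obtain h :: "'a coeffs" where h: "h \<in> Rcar s t"
      "monomial (Suc a) b = theta_mul s t h + (if Suc a + b < s then scale ((-1) ^ b) (monomial (Suc a + b) 0) else 0)"
      using Suc.IH[OF True Suc_lessD[OF Suc.prems(2)]] by blast
    have "monomial a (Suc b) = theta_mul s t (monomial a b) - (monomial (Suc a) b :: 'a coeffs)"
      using \<theta> True by (simp add: eq_diff_eq add.commute)
    also have "\<dots> = theta_mul s t (monomial a b - h)
        - (if a + Suc b < s then scale ((-1) ^ b) (monomial (a + Suc b) 0) else 0)"
      using h(2) by (simp add: theta_mul_diff algebra_simps)
    also have "\<dots> = theta_mul s t (monomial a b - h)
        + (if a + Suc b < s then scale ((-1) ^ Suc b) (monomial (a + Suc b) 0) else 0)"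
      by (simp add: scale_def fun_eq_iff)
    finally have "monomial a (Suc b) = theta_mul s t (monomial a b - h)
        + (if a + Suc b < s then scale ((-1) ^ Suc b) (monomial (a + Suc b) 0) else 0)" .
    moreover have "monomial a b - h \<in> Rcar s t"
      using Suc.prems by (intro graded_submodule.diff_closed[OF graded_submodule_Rcar] monomial_Rcar h(1)) auto
    ultimately show ?thesis
      by blast
  next
    case False
    then show ?thesis
      using \<theta> Suc.prems monomial_Rcar[of a s b t] by (intro bexI[of _ "monomial a b"]) auto
  qed
qed

lemma scale_monomial_mod_theta:
  assumes "c \<noteq> 0 \<Longrightarrow> a < s \<and> b < t"
  shows "\<exists>h\<in>Rcar s t. scale c (monomial a b)
    = theta_mul s t h + (if a + b < s then scale ((-1) ^ b * c) (monomial (a + b) 0) else 0)"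
proof (cases "c = 0")
  case True
  then have "scale c (monomial a b) = theta_mul s t 0
      + (if a + b < s then scale ((-1) ^ b * c) (monomial (a + b) 0) else 0)"
    by (simp add: theta_mul_zero)
  then show ?thesis
    using graded_submodule.zero_mem[OF graded_submodule_Rcar] by blast
next
  case False
  then obtain h :: "'a coeffs" where h: "h \<in> Rcar s t"
    "monomial a b = theta_mul s t h + (if a + b < s then scale ((-1) ^ b) (monomial (a + b) 0) else 0)"
    using monomial_mod_theta assms by blast
  have "scale c (monomial a b) = theta_mul s t (scale c h)
      + (if a + b < s then scale ((-1) ^ b * c) (monomial (a + b) 0) else 0)"
    by (simp add: h(2) theta_mul_scale scale_add_right scale_scale mult.commute)
  moreover have "scale c h \<in> Rcar s t"
    using h(1) by (rule graded_submodule.scale_closed[OF graded_submodule_Rcar])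
  ultimately show ?thesis
    by (rule rev_bexI[rotated])
qed

lemma homog_expansion:
  assumes "Rhomog d g"
  shows "g = (\<Sum>b\<le>d. scale (g (d - b) b) (monomial (d - b) b))"
proof (intro ext)
  fix x y
  have "(\<Sum>b\<le>d. scale (g (d - b) b) (monomial (d - b) b)) x y
      = (\<Sum>b\<le>d. if b = y then (if x + y = d then g x y else 0) else 0)"
    unfolding sum_apply2 by (intro sum.cong refl) (auto simp: scale_apply monomial_def)
  also have "\<dots> = g x y"
    using assms by (auto simp: Rhomog_def)
  finally show "g x y = (\<Sum>b\<le>d. scale (g (d - b) b) (monomial (d - b) b)) x y" ..
qed

lemma homog_mod_theta:
  assumes g: "g \<in> Rcar s t" and "Rhomog d g"
  shows "\<exists>h\<in>Rcar s t. g = theta_mul s t h + (if d < s then scale (coeff_y_neg_x d g) (monomial d 0) else 0)"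
proof -
  let ?x = "\<lambda>c. if d < s then scale c (monomial d 0) else 0"
  have "\<exists>h\<in>Rcar s t. scale (g (d - b) b) (monomial (d - b) b) = theta_mul s t h + ?x ((-1) ^ b * g (d - b) b)"
    if "b \<le> d" for b
  proof -
    have "g (d - b) b \<noteq> 0 \<Longrightarrow> d - b < s \<and> b < t"
      using g unfolding Rcar_def by (metis (mono_tags, lifting) mem_Collect_eq not_less)
    then have "\<exists>h\<in>Rcar s t. scale (g (d - b) b) (monomial (d - b) b) = theta_mul s t h
        + (if d - b + b < s then scale ((-1) ^ b * g (d - b) b) (monomial (d - b + b) 0) else 0)"
      by (rule scale_monomial_mod_theta)
    moreover have "d - b + b = d"
      using that by simp
    ultimately show ?thesis
      by (simp only:)
  qed
  then obtain H where H: "\<And>b. b \<le> d \<Longrightarrow> H b \<in> Rcar s t"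
    "\<And>b. b \<le> d \<Longrightarrow> scale (g (d - b) b) (monomial (d - b) b) = theta_mul s t (H b) + ?x ((-1) ^ b * g (d - b) b)"
    by metis
  have "g = (\<Sum>b\<le>d. scale (g (d - b) b) (monomial (d - b) b))"
    by (rule homog_expansion[OF assms(2)])
  also have "\<dots> = (\<Sum>b\<le>d. theta_mul s t (H b) + ?x ((-1) ^ b * g (d - b) b))"
    using H(2) by (intro sum.cong) simp_all
  also have "\<dots> = theta_mul s t (\<Sum>b\<le>d. H b) + ?x (coeff_y_neg_x d g)"
    by (cases "d < s") (simp_all add: theta_mul_sum sum.distrib coeff_y_neg_x_def scale_sum_left)
  finally have "g = theta_mul s t (\<Sum>b\<le>d. H b) + ?x (coeff_y_neg_x d g)" .
  moreover have "(\<Sum>b\<le>d. H b) \<in> Rcar s t"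
    using H(1) by (intro graded_submodule.sum_closed[OF graded_submodule_Rcar]) simp
  ultimately show ?thesis
    by (rule rev_bexI[rotated])
qed

subsection \<open>Decompositions into cyclic summands\<close>

text \<open>R = k[\<theta>] (w 0) \<oplus> ... \<oplus> k[\<theta>] (w (k - 1)) \<oplus> V, where V is the part not yet decomposed.\<close>

locale partial_decomp = graded_submodule s t V
  for s t :: nat and V :: "'a::field coeffs set" +
  fixes w :: "nat \<Rightarrow> 'a coeffs" and deg :: "nat \<Rightarrow> nat" and k :: nat
  assumes gen_Rcar: "i < k \<Longrightarrow> w i \<in> Rcar s t"
    and gen_nonzero: "i < k \<Longrightarrow> w i \<noteq> 0"
    and gen_homog: "i < k \<Longrightarrow> Rhomog (deg i) (w i)"
    and spanning: "(r :: 'a coeffs) \<in> Rcar s t \<Longrightarrow>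
      \<exists>m. (\<forall>i<k. m i \<in> theta_cyclic s t (w i)) \<and> r - (\<Sum>i<k. m i) \<in> V"
    and independent: "\<lbrakk>\<forall>i<k. m i \<in> theta_cyclic s t (w i); v \<in> V; (\<Sum>i<k. m i) + v = 0; i < k\<rbrakk>
      \<Longrightarrow> m i = 0"

lemma partial_decomp_empty: "partial_decomp s t (Rcar s t) w deg 0"
  by (intro partial_decomp.intro graded_submodule_Rcar partial_decomp_axioms.intro) auto

context partial_decomp
begin

lemma add_summand:
  assumes "graded_submodule s t W" and "W \<subseteq> V"
    and \<omega>: "\<omega> \<in> V" "\<omega> \<noteq> 0" "Rhomog d \<omega>"
    and split: "\<forall>u\<in>V. \<exists>m\<in>theta_cyclic s t \<omega>. u - m \<in> W"
    and disjoint: "\<forall>m\<in>theta_cyclic s t \<omega>. m \<in> W \<longrightarrow> m = 0"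
  shows "partial_decomp s t W (w(k := \<omega>)) (deg(k := d)) (Suc k)"
proof -
  interpret W: graded_submodule s t W
    by (fact assms(1))
  have sum_upd: "(\<Sum>i<Suc k. m i) = (\<Sum>i<k. m i) + m k" for m :: "nat \<Rightarrow> 'a coeffs"
    by simp
  show ?thesis
  proof unfold_locales
    fix i assume "i < Suc k"
    then show "(w(k := \<omega>)) i \<in> Rcar s t" "(w(k := \<omega>)) i \<noteq> 0" "Rhomog ((deg(k := d)) i) ((w(k := \<omega>)) i)"
      using gen_Rcar gen_nonzero gen_homog \<omega> subset_Rcar by (auto simp: less_Suc_eq)
  next
    fix r :: "'a coeffs" assume "r \<in> Rcar s t"
    then obtain m where m: "\<forall>i<k. m i \<in> theta_cyclic s t (w i)" "r - (\<Sum>i<k. m i) \<in> V"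
      using spanning by blast
    then obtain m\<omega> where "m\<omega> \<in> theta_cyclic s t \<omega>" "r - (\<Sum>i<k. m i) - m\<omega> \<in> W"
      using split by blast
    then show "\<exists>m. (\<forall>i<Suc k. m i \<in> theta_cyclic s t ((w(k := \<omega>)) i)) \<and> r - (\<Sum>i<Suc k. m i) \<in> W"
      using m(1) by (intro exI[of _ "m(k := m\<omega>)"]) (auto simp: less_Suc_eq sum_upd diff_diff_eq)
  next
    fix m v i
    assume m: "\<forall>i<Suc k. m i \<in> theta_cyclic s t ((w(k := \<omega>)) i)" and "v \<in> W"
      and sum: "(\<Sum>i<Suc k. m i) + v = 0" and "i < Suc k"
    have mk: "m k \<in> theta_cyclic s t \<omega>" and "\<forall>i<k. m i \<in> theta_cyclic s t (w i)"
      using m by (auto simp: less_Suc_eq)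
    moreover have "m k + v \<in> V"
      using mk \<open>v \<in> W\<close> \<open>W \<subseteq> V\<close> theta_cyclic_subset[OF \<omega>(1)] add_closed by blast
    moreover have "(\<Sum>i<k. m i) + (m k + v) = 0"
      using sum by (simp add: sum_upd add.assoc)
    ultimately have low: "m j = 0" if "j < k" for j
      using independent that by blast
    then have "m k = - v"
      using sum by (simp add: sum_upd eq_neg_iff_add_eq_0)
    then have "m k = 0"
      using disjoint mk \<open>v \<in> W\<close> W.uminus_closed by auto
    then show "m i = 0"
      using low \<open>i < Suc k\<close> by (auto simp: less_Suc_eq)
  qed
qed

lemma extend:
  assumes "0 < s" and "v \<in> V" and "v \<noteq> 0"
  obtains \<omega> d W where "partial_decomp s t W (w(k := \<omega>)) (deg(k := d)) (Suc k)"
proof -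
  obtain \<omega> d n a b where \<omega>: "\<omega> \<in> V" "Rhomog d \<omega>"
    and height: "\<forall>u\<in>V. theta_pow s t (Suc n) u = 0" and ab: "theta_pow s t n \<omega> a b \<noteq> 0"
    using exists_homogeneous_of_max_height[OF assms] .
  define W where "W = {u\<in>V. \<forall>j\<le>n. theta_pow s t j u a b = 0}"
  have W: "graded_submodule s t W"
    unfolding W_def using height by (rule graded_submodule_annihilator)
  have "W \<subseteq> V"
    by (auto simp: W_def)
  have "\<omega> \<noteq> 0"
    using ab by (auto simp: theta_pow_zero)
  have "\<forall>u\<in>V. \<exists>m\<in>theta_cyclic s t \<omega>. u - m \<in> W"
    and "\<forall>m\<in>theta_cyclic s t \<omega>. m \<in> W \<longrightarrow> m = 0"
    using theta_cyclic_complement[OF assms(1) \<omega> height ab] unfolding W_def by blast+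
  then have "partial_decomp s t W (w(k := \<omega>)) (deg(k := d)) (Suc k)"
    by (rule add_summand[OF W \<open>W \<subseteq> V\<close> \<omega>(1) \<open>\<omega> \<noteq> 0\<close> \<omega>(2)])
  then show thesis
    by (rule that)
qed

lemma independent_mod_theta:
  assumes "0 < s" and "h \<in> Rcar s t" and h: "theta_mul s t h = (\<Sum>i<k. scale (\<beta> i) (w i))" and "l < k"
  shows "\<beta> l = 0"
proof -
  obtain m where m: "\<forall>i<k. m i \<in> theta_cyclic s t (w i)" and v: "h - (\<Sum>i<k. m i) \<in> V"
    using spanning assms(2) by blast
  define m' where "m' i = theta_mul s t (m i) - scale (\<beta> i) (w i)" for i
  have "\<forall>i<k. m' i \<in> theta_cyclic s t (w i)"
    using m self_in_theta_cyclic[OF assms(1)]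
    by (auto simp: m'_def intro!: theta_cyclic_diff theta_cyclic_scale theta_cyclic_theta_mul[OF assms(1)])
  moreover have "(\<Sum>i<k. m' i) + theta_mul s t (h - (\<Sum>i<k. m i)) = 0"
    by (simp add: m'_def sum_subtractf theta_mul_diff theta_mul_sum h)
  ultimately have "m' l = 0"
    using independent theta_mul_closed[OF v] \<open>l < k\<close> by blast
  then have eq: "theta_mul s t (m l) = scale (\<beta> l) (w l)"
    by (simp add: m'_def)
  obtain a b where ab: "w l a b \<noteq> 0"
    using gen_nonzero[OF \<open>l < k\<close>] by (auto simp: fun_eq_iff)
  then have "a + b = deg l"
    using gen_homog[OF \<open>l < k\<close>] by (auto simp: Rhomog_def)
  obtain c where "m l = theta_poly_mul s t c (w l)"
    using m \<open>l < k\<close> by (auto simp: theta_cyclic_def)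
  then have "theta_mul s t (m l) a b = 0"
    using theta_mul_theta_poly_mul_apply_eq_0[OF gen_homog[OF \<open>l < k\<close>] \<open>a + b = deg l\<close>] by simp
  then show ?thesis
    using eq ab by (simp add: scale_apply)
qed

lemma gen_mod_theta_nonzero:
  assumes "0 < s" and "i < k"
  shows "deg i < s" and "coeff_y_neg_x (deg i) (w i) \<noteq> 0"
proof -
  obtain h where h: "h \<in> Rcar s t" and eq: "w i = theta_mul s t h
      + (if deg i < s then scale (coeff_y_neg_x (deg i) (w i)) (monomial (deg i) 0) else 0)"
    using homog_mod_theta[OF gen_Rcar[OF assms(2)] gen_homog[OF assms(2)]] by blast
  have "(if j = i then 1 else 0 :: 'a) = 0" if "theta_mul s t h = w i" and "j < k" for j
    by (rule independent_mod_theta[OF assms(1) h _ that(2)])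
      (use assms(2) that(1) in \<open>simp add: if_distrib[of "\<lambda>c. scale c _"] cong: if_cong\<close>)
  then have "theta_mul s t h \<noteq> w i"
    using assms(2) by force
  then show "deg i < s" and "coeff_y_neg_x (deg i) (w i) \<noteq> 0"
    using eq by (auto split: if_splits)
qed

lemma inj_on_deg:
  assumes "0 < s"
  shows "inj_on deg {..<k}"
proof (rule inj_onI, rule ccontr)
  fix i j assume ij: "i \<in> {..<k}" "j \<in> {..<k}" "deg i = deg j" "i \<noteq> j"
  let ?d = "deg i"
  define \<alpha> where "\<alpha> = coeff_y_neg_x ?d (w i)"
  define \<alpha>' where "\<alpha>' = coeff_y_neg_x ?d (w j)"
  have "\<alpha>' \<noteq> 0" "?d < s"
    using gen_mod_theta_nonzero[OF assms, of j] gen_mod_theta_nonzero[OF assms, of i] ij by (auto simp: \<alpha>'_def)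
  obtain h h' where "h \<in> Rcar s t" "w i = theta_mul s t h + scale \<alpha> (monomial ?d 0)"
      "h' \<in> Rcar s t" "w j = theta_mul s t h' + scale \<alpha>' (monomial ?d 0)"
    using homog_mod_theta[OF gen_Rcar gen_homog, of i] homog_mod_theta[OF gen_Rcar gen_homog, of j]
      ij \<open>?d < s\<close> unfolding \<alpha>_def \<alpha>'_def by auto
  then have "theta_mul s t (scale \<alpha>' h - scale \<alpha> h') = scale \<alpha>' (w i) - scale \<alpha> (w j)"
    by (simp only: theta_mul_diff theta_mul_scale) (simp add: scale_def fun_eq_iff algebra_simps)
  also have "\<dots> = (\<Sum>l<k. scale ((if l = i then \<alpha>' else 0) - (if l = j then \<alpha> else 0)) (w l))"
    using ij by (simp add: scale_diff_left[symmetric] sum_subtractf if_distrib[of "\<lambda>c. scale c _"] cong: if_cong)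
  finally have "(if i = i then \<alpha>' else 0) - (if i = j then \<alpha> else 0) = 0"
    using ij \<open>h \<in> Rcar s t\<close> \<open>h' \<in> Rcar s t\<close>
    by (intro independent_mod_theta[OF assms]) (auto intro: graded_submodule.diff_closed[OF graded_submodule_Rcar]
        graded_submodule.scale_closed[OF graded_submodule_Rcar])
  then show False
    using \<open>\<alpha>' \<noteq> 0\<close> \<open>i \<noteq> j\<close> by simp
qed

lemma num_gens_le:
  assumes "0 < s"
  shows "k \<le> s"
proof -
  have "card {..<k} \<le> card {..<s}"
    using inj_on_deg[OF assms] gen_mod_theta_nonzero(1)[OF assms] by (intro card_inj_on_le) auto
  then show ?thesis
    by simp
qed

lemma bij_betw_deg:
  assumes "0 < s" and "s \<le> t" and "V = {0}"
  shows "bij_betw deg {..<k} {..<s}"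
proof -
  have "d \<in> deg ` {..<k}" if ds: "d < s" for d
  proof (rule ccontr)
    assume d: "d \<notin> deg ` {..<k}"
    obtain m where m: "\<forall>i<k. m i \<in> theta_cyclic s t (w i)" and "monomial d 0 - (\<Sum>i<k. m i) \<in> V"
      using spanning monomial_Rcar[OF ds, of 0 t] assms(1,2) ds by force
    then have "monomial d 0 = (\<Sum>i<k. m i)"
      using assms(3) by simp
    moreover have "coeff_y_neg_x d (m i) = 0" if i: "i < k" for i
    proof -
      obtain c where "m i = theta_poly_mul s t c (w i)"
        using m i by (auto simp: theta_cyclic_def)
      moreover have "deg i \<noteq> d"
        using d i by auto
      then have "coeff_y_neg_x d (w i) = 0"
        by (rule coeff_y_neg_x_homog[OF gen_homog[OF i]])
      ultimately show ?thesis
        using coeff_y_neg_x_theta_poly_mul[OF \<open>d < s\<close> assms(2), of c "w i"] by simp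
    qed
    ultimately have "coeff_y_neg_x d (monomial d 0 :: 'a coeffs) = 0"
      by (simp add: coeff_y_neg_x_sum)
    then show False
      by (simp add: coeff_y_neg_x_monomial)
  qed
  then show ?thesis
    using inj_on_deg[OF assms(1)] gen_mod_theta_nonzero(1)[OF assms(1)] by (auto simp: bij_betw_def)
qed

lemma reindex:
  assumes "bij_betw \<pi> {..<k} {..<k}"
  shows "partial_decomp s t V (w \<circ> \<pi>) (deg \<circ> \<pi>) k"
proof unfold_locales
  have \<pi>: "i < k \<Longrightarrow> \<pi> i < k" for i
    using assms by (auto simp: bij_betw_def)
  show "i < k \<Longrightarrow> (w \<circ> \<pi>) i \<in> Rcar s t" "i < k \<Longrightarrow> (w \<circ> \<pi>) i \<noteq> 0"
    "i < k \<Longrightarrow> Rhomog ((deg \<circ> \<pi>) i) ((w \<circ> \<pi>) i)" for i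
    using gen_Rcar gen_nonzero gen_homog \<pi> by auto
  have sum_\<pi>: "(\<Sum>i<k. m (\<pi> i)) = (\<Sum>i<k. m i)" for m :: "nat \<Rightarrow> 'a coeffs"
    using sum.reindex_bij_betw[OF assms] .
  show "\<exists>m. (\<forall>i<k. m i \<in> theta_cyclic s t ((w \<circ> \<pi>) i)) \<and> r - (\<Sum>i<k. m i) \<in> V"
    if r: "r \<in> Rcar s t" for r
  proof -
    obtain m where "\<forall>i<k. m i \<in> theta_cyclic s t (w i)" "r - (\<Sum>i<k. m i) \<in> V"
      using spanning[OF r] by blast
    then show ?thesis
      using \<pi> by (intro exI[of _ "m \<circ> \<pi>"]) (simp add: sum_\<pi>)
  qed
  show "m i = 0"
    if m: "\<forall>i<k. m i \<in> theta_cyclic s t ((w \<circ> \<pi>) i)" and v: "v \<in> V"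
      and sum: "(\<Sum>i<k. m i) + v = 0" and i: "i < k" for m v i
  proof -
    define \<pi>' where "\<pi>' = inv_into {..<k} \<pi>"
    have \<pi>': "bij_betw \<pi>' {..<k} {..<k}"
      unfolding \<pi>'_def using assms by (rule bij_betw_inv_into)
    have "\<forall>j<k. m (\<pi>' j) \<in> theta_cyclic s t (w j)"
    proof (intro allI impI)
      fix j assume "j < k"
      then have "\<pi>' j < k" and "\<pi> (\<pi>' j) = j"
        using \<pi>' assms unfolding \<pi>'_def by (auto simp: bij_betw_def f_inv_into_f)
      then show "m (\<pi>' j) \<in> theta_cyclic s t (w j)"
        using m by force
    qed
    moreover have "(\<Sum>j<k. m (\<pi>' j)) + v = 0"
      using sum sum.reindex_bij_betw[OF \<pi>', of m] by simp
    ultimately have "m (\<pi>' (\<pi> i)) = 0"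
      using independent[of "m \<circ> \<pi>'" v "\<pi> i"] v \<pi> i by simp
    then show ?thesis
      unfolding \<pi>'_def using assms i by (simp add: bij_betw_def inv_into_f_f)
  qed
qed

end

lemma exists_complete_decomp:
  assumes "0 < s"
  shows "\<exists>(w :: nat \<Rightarrow> 'a::field coeffs) deg k. partial_decomp s t {0} w deg k"
proof -
  have "\<exists>(w :: nat \<Rightarrow> 'a coeffs) deg k. partial_decomp s t {0} w deg k"
    if "partial_decomp s t V w deg k" for V and w :: "nat \<Rightarrow> 'a coeffs" and deg k
    using that
  proof (induction "s - k" arbitrary: V w deg k rule: less_induct)
    case less
    interpret partial_decomp s t V w deg k
      by (fact less.prems)
    show ?case
    proof (cases "V = {0}")
      case True
      with less.prems have "partial_decomp s t {0} w deg k"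
        by simp
      then show ?thesis
        by blast
    next
      case False
      then obtain v where "v \<in> V" "v \<noteq> 0"
        using zero_mem by blast
      then obtain \<omega> d W where P: "partial_decomp s t W (w(k := \<omega>)) (deg(k := d)) (Suc k)"
        using extend[OF assms] by blast
      moreover have "s - Suc k < s - k"
        using partial_decomp.num_gens_le[OF P assms] by simp
      ultimately show ?thesis
        using less.hyps by blast
    qed
  qed
  then show ?thesis
    using partial_decomp_empty by blast
qed

lemma ex1_sum_decomposition:
  fixes C :: "nat \<Rightarrow> 'b::ab_group_add set"
  assumes diff: "\<And>i x y. i < n \<Longrightarrow> x \<in> C i \<Longrightarrow> y \<in> C i \<Longrightarrow> x - y \<in> C i"
    and indep: "\<And>m i. \<forall>i<n. m i \<in> C i \<Longrightarrow> (\<Sum>i<n. m i) = 0 \<Longrightarrow> i < n \<Longrightarrow> m i = 0"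
    and m: "\<forall>i<n. m i \<in> C i" and r: "r = (\<Sum>i<n. m i)"
  shows "\<exists>!m. (\<forall>i<n. m i \<in> C i) \<and> (\<forall>i. n \<le> i \<longrightarrow> m i = 0) \<and> r = (\<Sum>i<n. m i)"
proof
  let ?m = "\<lambda>i. if i < n then m i else 0"
  show "(\<forall>i<n. ?m i \<in> C i) \<and> (\<forall>i. n \<le> i \<longrightarrow> ?m i = 0) \<and> r = (\<Sum>i<n. ?m i)"
    using m r by simp
next
  fix m' assume m': "(\<forall>i<n. m' i \<in> C i) \<and> (\<forall>i. n \<le> i \<longrightarrow> m' i = 0) \<and> r = (\<Sum>i<n. m' i)"
  have "m' i - m i = 0" if "i < n" for i
    using indep[of "\<lambda>i. m' i - m i" i] diff m m' r that by (simp add: sum_subtractf)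
  then show "m' = (\<lambda>i. if i < n then m i else 0)"
    using m' by (auto simp: fun_eq_iff)
qed

lemma exists_degree_indexed_decomp:
  assumes "0 < s" and "s \<le> t"
  shows "\<exists>\<omega> :: nat \<Rightarrow> 'a::field coeffs.
    (\<forall>d<s. \<omega> d \<in> Rcar s t \<and> \<omega> d \<noteq> 0 \<and> Rhomog d (\<omega> d)) \<and>
    (\<forall>r\<in>Rcar s t. \<exists>!m. (\<forall>d<s. m d \<in> theta_cyclic s t (\<omega> d)) \<and> (\<forall>d. s \<le> d \<longrightarrow> m d = 0)
      \<and> r = (\<Sum>d<s. m d))"
proof -
  obtain w :: "nat \<Rightarrow> 'a coeffs" and deg k where P: "partial_decomp s t {0} w deg k"
    using exists_complete_decomp[OF assms(1)] by blast
  have bij: "bij_betw deg {..<k} {..<s}"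
    using partial_decomp.bij_betw_deg[OF P assms] by simp
  then have "k = s"
    using bij_betw_same_card[OF bij] by simp
  define \<pi> where "\<pi> = inv_into {..<s} deg"
  have \<pi>: "bij_betw \<pi> {..<s} {..<s}"
    unfolding \<pi>_def using bij \<open>k = s\<close> by (simp add: bij_betw_inv_into)
  have deg_\<pi>: "deg (\<pi> d) = d" if "d < s" for d
    unfolding \<pi>_def using bij \<open>k = s\<close> that by (auto simp: bij_betw_def f_inv_into_f)
  interpret Q: partial_decomp s t "{0}" "w \<circ> \<pi>" "deg \<circ> \<pi>" s
    using partial_decomp.reindex[OF P] \<pi> \<open>k = s\<close> by simp
  show ?thesis
  proof (intro exI[of _ "w \<circ> \<pi>"] conjI ballI)
    show "\<forall>d<s. (w \<circ> \<pi>) d \<in> Rcar s t \<and> (w \<circ> \<pi>) d \<noteq> 0 \<and> Rhomog d ((w \<circ> \<pi>) d)"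
      using Q.gen_Rcar Q.gen_nonzero Q.gen_homog deg_\<pi> by simp
  next
    fix r :: "'a coeffs" assume "r \<in> Rcar s t"
    then obtain m where m: "\<forall>d<s. m d \<in> theta_cyclic s t ((w \<circ> \<pi>) d)" "r - (\<Sum>d<s. m d) \<in> {0}"
      using Q.spanning by blast
    show "\<exists>!m. (\<forall>d<s. m d \<in> theta_cyclic s t ((w \<circ> \<pi>) d)) \<and> (\<forall>d. s \<le> d \<longrightarrow> m d = 0)
      \<and> r = (\<Sum>d<s. m d)"
    proof (rule ex1_sum_decomposition)
      show "x - y \<in> theta_cyclic s t ((w \<circ> \<pi>) i)"
        if "x \<in> theta_cyclic s t ((w \<circ> \<pi>) i)" "y \<in> theta_cyclic s t ((w \<circ> \<pi>) i)" for i x y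
        using that by (rule theta_cyclic_diff)
      show "m' i = 0" if "\<forall>i<s. m' i \<in> theta_cyclic s t ((w \<circ> \<pi>) i)" "(\<Sum>i<s. m' i) = 0" "i < s" for m' i
        using Q.independent[of m' 0 i] that by simp
    qed (use m in auto)
  qed
qed

theorem theorem2p12:
  fixes s t :: nat
  assumes "alg_closed TYPE('a::field)"
    and "1 \<le> s" and "s \<le> t"
  shows "\<exists>\<omega> :: nat \<Rightarrow> nat \<Rightarrow> nat \<Rightarrow> 'a.
           (\<forall>i<s. \<omega> i \<in> Rcar s t \<and> \<omega> i \<noteq> Rzero \<and> Rhomog i (\<omega> i)) \<and>
           (\<forall>r \<in> Rcar s t. \<exists>!m :: nat \<Rightarrow> nat \<Rightarrow> nat \<Rightarrow> 'a.
              (\<forall>i<s. m i \<in> Rcyclic s t (\<omega> i)) \<and> (\<forall>i. s \<le> i \<longrightarrow> m i = Rzero) \<and>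
              r = (\<lambda>a b. \<Sum>i<s. m i a b))"
proof -
  have "0 < s"
    using assms(2) by simp
  obtain \<omega> :: "nat \<Rightarrow> 'a coeffs"
    where gen: "\<forall>d<s. \<omega> d \<in> Rcar s t \<and> \<omega> d \<noteq> 0 \<and> Rhomog d (\<omega> d)"
    and decomp: "\<forall>r\<in>Rcar s t.
      \<exists>!m. (\<forall>d<s. m d \<in> theta_cyclic s t (\<omega> d)) \<and> (\<forall>d. s \<le> d \<longrightarrow> m d = 0)
        \<and> r = (\<Sum>d<s. m d)"
    using exists_degree_indexed_decomp[OF \<open>0 < s\<close> assms(3)] by (elim exE conjE)
  have Rcyclic: "Rcyclic s t (\<omega> i) = theta_cyclic s t (\<omega> i)" if "i < s" for i
    using gen that by (intro Rcyclic_eq_theta_cyclic[OF \<open>0 < s\<close>]) blast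
  have sum: "(\<lambda>a b. \<Sum>i<s. m i a b) = (\<Sum>i<s. m i)" for m :: "nat \<Rightarrow> 'a coeffs"
    by (simp add: sum_apply2 fun_eq_iff)
  have Rzero: "Rzero = (0 :: 'a coeffs)"
    by (simp add: Rzero_def fun_eq_iff)
  show ?thesis
    unfolding sum Rzero using gen decomp by (intro exI[of _ \<omega>]) (simp add: Rcyclic)
qed

end
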